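(* Let $f_0,f_1\in \mathrm{PL}_0(\mathbf{I})$ and let $(a,c)$ be an orbital of $f_0$ that is not an orbital of $f_1$. Assume that every orbital $B$ of $f_1$ satisfies either $B\subseteq(a,c)$ or $B\cap(a,c)=\emptyset$. Let $(b_1,d_1),\dots,(b_n,d_n)$, with $n\ge1$, be all the orbitals of $f_1$ properly contained in $(a,c)$, in increasing order. Suppose that either (Up) $(a,c)$ is an up-bump of $f_0$ and: $a<b_1$; there is $p<c$ with $f_0|_{[p,c]}=f_1|_{[p,c]}$; $d_n=c$; if $p$ is the minimal such point then $b_nf_0\ge p$; and $b_1f_0>b_n$; or (Down) $(a,c)$ is a down-bump of $f_0$ and: $d_n<c$; there is $\rho>a$ with $f_0|_{[a,\rho]}=f_1|_{[a,\rho]}$; $b_1=a$; if $\rho$ is the maximal such point then $d_1f_0\le\rho$; and $d_nf_0<d_1$. Then $[f_0f_1^{-1},f_1^{f_0^2}]|_{[a,c]}=1$.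
   Context: $\mathrm{PL}_0(\mathbf{I})$ is the group of orientation-preserving piecewise-linear homeomorphisms of $[0,1]$ with finitely many points of non-differentiability. Functions act on the right: $tf=f(t)$, $fg=g\circ f$, $a^b=b^{-1}ab$, $[a,b]=aba^{-1}b^{-1}$. The orbitals of $f$ are the connected components (open intervals) of $\operatorname{Supp}(f)=\{x: xf\ne x\}$; an orbital $A$ is an up-bump (resp. down-bump) if $xf>x$ (resp. $xf<x$) for all $x\in A$. *)

theory Defs
  imports "HOL-Analysis.Analysis"
begin

text \<open>Elements of PL_0(I), represented as total functions real => real that are the
  identity outside [0,1] (so they are bijections of the reals and inv is the group inverse).\<close>
definition PL0 :: "(real \<Rightarrow> real) \<Rightarrow> bool" where
  "PL0 f \<longleftrightarrow> continuous_on {0..1} f \<and> strict_mono_on {0..1} f \<and> f 0 = 0 \<and> f 1 = 1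
     \<and> (\<forall>x. x \<notin> {0..1} \<longrightarrow> f x = x)
     \<and> (\<exists>S. finite S \<and> 0 \<in> S \<and> 1 \<in> S \<and> S \<subseteq> {0..1} \<and>
           (\<forall>u v. u \<in> S \<and> v \<in> S \<and> u < v \<and> {u<..<v} \<inter> S = {} \<longrightarrow>
              (\<exists>m k. \<forall>x\<in>{u..v}. f x = m * x + k)))"

definition supp :: "(real \<Rightarrow> real) \<Rightarrow> real set" where
  "supp f = {x. f x \<noteq> x}"

definition orbital :: "(real \<Rightarrow> real) \<Rightarrow> real set \<Rightarrow> bool" where
  "orbital f A \<longleftrightarrow> A \<in> components (supp f)"

definition up_bump :: "(real \<Rightarrow> real) \<Rightarrow> real set \<Rightarrow> bool" where
  "up_bump f A \<longleftrightarrow> orbital f A \<and> (\<forall>x\<in>A. f x > x)"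

definition down_bump :: "(real \<Rightarrow> real) \<Rightarrow> real set \<Rightarrow> bool" where
  "down_bump f A \<longleftrightarrow> orbital f A \<and> (\<forall>x\<in>A. f x < x)"

text \<open>Right actions: t(fg) = g(f t), so the product fg is g o f.
  Conjugation a^b = b^-1 a b, commutator [a,b] = a b a^-1 b^-1.\<close>
definition rmul :: "(real \<Rightarrow> real) \<Rightarrow> (real \<Rightarrow> real) \<Rightarrow> (real \<Rightarrow> real)" where
  "rmul f g = g \<circ> f"

definition conjg :: "(real \<Rightarrow> real) \<Rightarrow> (real \<Rightarrow> real) \<Rightarrow> (real \<Rightarrow> real)" where
  "conjg a b = rmul (rmul (inv b) a) b"

definition comm :: "(real \<Rightarrow> real) \<Rightarrow> (real \<Rightarrow> real) \<Rightarrow> (real \<Rightarrow> real)" where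
  "comm a b = rmul (rmul (rmul a b) (inv a)) (inv b)"

end

theory Submission
  imports Defs
begin

text \<open>Let \<open>h = f\<^sub>0 f\<^sub>1\<^sup>-\<^sup>1\<close> and \<open>k = f\<^sub>1^(f\<^sub>0\<^sup>2)\<close>. The support of \<open>k\<close> is the image of
  \<open>Supp f\<^sub>1\<close> under \<open>f\<^sub>0\<^sup>2\<close>, and \<open>h\<close> fixes every point where \<open>f\<^sub>0\<close> and \<open>f\<^sub>1\<close> agree.
  In the up case a point \<open>z\<close> of \<open>Supp f\<^sub>1 \<inter> (a,c)\<close> lies above \<open>b\<^sub>1\<close>, so \<open>z f\<^sub>0\<^sup>2 > b\<^sub>n f\<^sub>0 \<ge> p\<close>,
  where \<open>p\<close> is the least point with \<open>f\<^sub>0 = f\<^sub>1\<close> on \<open>[p,c]\<close> (it exists because the agreement set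
  is closed); the down case is the mirror image. Thus \<open>h\<close> and \<open>k\<close> are bijections preserving
  \<open>[a,c]\<close> with disjoint supports there, and such bijections commute.\<close>

lemma PL0_strict_mono:
  assumes "PL0 f"
  shows "strict_mono f"
proof (rule strict_monoI)
  have sm: "strict_mono_on {0..1} f" and ends: "f 0 = 0" "f 1 = 1"
    and outside: "\<And>x. x \<notin> {0..1} \<Longrightarrow> f x = x"
    using assms by (auto simp: PL0_def)
  have into: "f x \<in> {0..1}" if "x \<in> {0..1}" for x
    using strict_mono_on_leD[OF sm, of 0 x] strict_mono_on_leD[OF sm, of x 1] that ends by auto
  fix x y :: real
  assume "x < y"
  then show "f x < f y"
    using strict_mono_onD[OF sm] into[of x] into[of y] outside[of x] outside[of y]
    by (cases "x \<in> {0..1}"; cases "y \<in> {0..1}") auto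
qed

lemma PL0_bij:
  assumes "PL0 f"
  shows "bij f"
proof (rule bijI)
  show "inj f"
    using PL0_strict_mono[OF assms] by (rule strict_mono_imp_inj_on)
  have cont: "continuous_on {0..1} f" and ends: "f 0 = 0" "f 1 = 1"
    and outside: "\<And>x. x \<notin> {0..1} \<Longrightarrow> f x = x"
    using assms by (auto simp: PL0_def)
  have "y \<in> range f" for y
  proof (cases "y \<in> {0..1}")
    case True
    then show ?thesis
      using IVT'[of f 0 y 1] cont ends by force
  next
    case False
    then show ?thesis
      using outside by (metis rangeI)
  qed
  then show "surj f"
    by blast
qed

lemma PL0_supp_subset:
  assumes "PL0 f"
  shows "supp f \<subseteq> {0<..<1}"
proof
  fix x assume "x \<in> supp f"
  then have "f x \<noteq> x"
    by (simp add: supp_def)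
  moreover have "f 0 = 0" "f 1 = 1" "\<And>x. x \<notin> {0..1} \<Longrightarrow> f x = x"
    using assms by (auto simp: PL0_def)
  ultimately have "x \<in> {0..1}" "x \<noteq> 0" "x \<noteq> 1"
    by auto
  then show "x \<in> {0<..<1}"
    by auto
qed

lemma interval_component_endpoints:
  fixes u v :: real
  assumes C: "{u<..<v} \<in> components S"
  shows "u < v" "u \<notin> S" "v \<notin> S"
proof -
  show uv: "u < v"
    using in_components_nonempty[OF C] by auto
  have sub: "{u<..<v} \<subseteq> S"
    using in_components_subset[OF C] .
  have meets: "{u<..<v} \<inter> T \<noteq> {}" if "{u<..<v} \<subseteq> T" for T
  proof -
    have "(u + v) / 2 \<in> {u<..<v}"
      using uv by auto
    then show ?thesis
      using that by blast
  qed
  show "u \<notin> S"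
  proof
    assume "u \<in> S"
    then have "{u..<v} \<subseteq> S"
      using sub by (auto simp: subset_iff le_less)
    moreover have "{u<..<v} \<inter> {u..<v} \<noteq> {}"
      by (rule meets) auto
    ultimately have "{u..<v} \<subseteq> {u<..<v}"
      by (intro components_maximal[OF C]) (auto simp: is_interval_connected_1 is_interval_ci)
    then show False
      using uv by auto
  qed
  show "v \<notin> S"
  proof
    assume "v \<in> S"
    then have "{u<..v} \<subseteq> S"
      using sub by (auto simp: subset_iff le_less)
    moreover have "{u<..<v} \<inter> {u<..v} \<noteq> {}"
      by (rule meets) auto
    ultimately have "{u<..v} \<subseteq> {u<..<v}"
      by (intro components_maximal[OF C]) (auto simp: is_interval_connected_1 is_interval_ic)
    then show False
      using uv by auto
  qed
qed

lemma PL0_orbital_interval: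
  assumes "PL0 f" and "orbital f {a<..<c}"
  shows "a < c" "f a = a" "f c = c" "{a..c} \<subseteq> {0..1}" "\<And>x. x \<in> {a<..<c} \<Longrightarrow> f x \<noteq> x"
proof -
  have C: "{a<..<c} \<in> components (supp f)"
    using assms(2) by (simp add: orbital_def)
  then show "a < c" "f a = a" "f c = c"
    using interval_component_endpoints[OF C] by (auto simp: supp_def)
  have "{a<..<c} \<subseteq> {0<..<1}"
    using in_components_subset[OF C] PL0_supp_subset[OF assms(1)] by blast
  then show "{a..c} \<subseteq> {0..1}"
    using \<open>a < c\<close> greaterThanLessThan_subseteq_greaterThanLessThan[of a c 0 1] by auto
  show "f x \<noteq> x" if "x \<in> {a<..<c}" for x
    using in_components_subset[OF C] that by (auto simp: supp_def)
qed

lemma component_of_moved_point_meets_interior: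
  fixes f :: "real \<Rightarrow> real"
  assumes cont: "continuous_on {a..c} f" and ac: "a < c"
    and x: "x \<in> {a..c}" and moved: "f x \<noteq> x"
  shows "connected_component_set (supp f) x \<inter> {a<..<c} \<noteq> {}"
proof -
  have "continuous_on {a..c} (\<lambda>y. f y - y)"
    using cont by (intro continuous_intros)
  then obtain e where e: "e > 0"
    and near: "\<And>y. y \<in> {a..c} \<Longrightarrow> dist y x < e \<Longrightarrow> dist (f y - y) (f x - x) < \<bar>f x - x\<bar>"
    using x moved unfolding continuous_on_iff by (metis zero_less_abs_iff right_minus_eq)
  \<comment> \<open>A short segment from \<open>x\<close> towards the midpoint of \<open>[a,c]\<close> stays inside \<open>supp f\<close>.\<close>
  define s where "s = min 1 (e / (c - a))"
  define y where "y = (1 - s) * x + s * ((a + c) / 2)"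
  have s: "0 < s" "s \<le> 1" "s * (c - a) \<le> e"
    using e ac by (auto simp: s_def min_def field_simps)
  have y: "y \<in> {a<..<c}"
  proof -
    have "s * a < s * ((a + c) / 2)" "s * ((a + c) / 2) < s * c"
      using s ac by auto
    moreover have "(1 - s) * a \<le> (1 - s) * x" "(1 - s) * x \<le> (1 - s) * c"
      using s x by (auto intro: mult_left_mono)
    moreover have "a = (1 - s) * a + s * a" "c = (1 - s) * c + s * c"
      by (simp_all add: algebra_simps)
    ultimately show ?thesis
      unfolding y_def by auto
  qed
  have "\<bar>(a + c) / 2 - x\<bar> \<le> (c - a) / 2"
    using x by (auto simp: abs_if field_simps)
  then have "dist y x \<le> e / 2"
  proof -
    have "y - x = s * ((a + c) / 2 - x)"
      by (simp add: y_def algebra_simps)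
    then have "dist y x = s * \<bar>(a + c) / 2 - x\<bar>"
      using s by (simp add: dist_real_def abs_mult)
    also have "\<dots> \<le> s * ((c - a) / 2)"
      using \<open>\<bar>(a + c) / 2 - x\<bar> \<le> (c - a) / 2\<close> s by (intro mult_left_mono) auto
    also have "\<dots> \<le> e / 2"
      using s by simp
    finally show ?thesis .
  qed
  have "closed_segment x y \<subseteq> supp f"
  proof
    fix z assume z: "z \<in> closed_segment x y"
    have "z \<in> {a..c}"
      using closed_segment_subset[of x "{a..c}" y] x y z by auto
    moreover have "dist z x < e"
      using segment_bound1[OF z] \<open>dist y x \<le> e / 2\<close> e by (simp add: dist_norm)
    ultimately show "z \<in> supp f"
      using near[of z] by (auto simp: supp_def)
  qed
  then have "y \<in> connected_component_set (supp f) x"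
    by (meson connected_component_maximal connected_segment ends_in_segment subsetD)
  then show ?thesis
    using y by blast
qed

lemma nested_orbitals_fix_endpoints:
  fixes f :: "real \<Rightarrow> real"
  assumes cont: "continuous_on {a..c} f" and ac: "a < c"
    and nested: "\<forall>B. orbital f B \<longrightarrow> B \<subseteq> {a<..<c} \<or> B \<inter> {a<..<c} = {}"
    and x: "x \<in> {a, c}"
  shows "f x = x"
proof (rule ccontr)
  assume moved: "f x \<noteq> x"
  let ?C = "connected_component_set (supp f) x"
  have "orbital f ?C"
    using moved by (auto simp: orbital_def components_iff supp_def)
  moreover have "?C \<inter> {a<..<c} \<noteq> {}"
    using component_of_moved_point_meets_interior[OF cont ac _ moved] x ac by auto
  moreover have "x \<in> ?C"
    using moved by (simp add: supp_def)
  ultimately have "?C \<subseteq> {a<..<c}"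
    using nested by blast
  then have "x \<in> {a<..<c}"
    using \<open>x \<in> ?C\<close> by blast
  then show False
    using x by auto
qed

lemma strict_mono_fixing_endpoints_image_Icc:
  fixes f :: "'a::linorder \<Rightarrow> 'a"
  assumes mono: "strict_mono f" and "surj f" and ends: "f a = a" "f c = c"
  shows "f ` {a..c} = {a..c}"
proof
  have iff: "f x \<in> {a..c} \<longleftrightarrow> x \<in> {a..c}" for x
    using strict_mono_less_eq[OF mono, of a x] strict_mono_less_eq[OF mono, of x c] ends by simp
  then show "f ` {a..c} \<subseteq> {a..c}"
    by auto
  show "{a..c} \<subseteq> f ` {a..c}"
  proof
    fix y assume y: "y \<in> {a..c}"
    obtain x where "y = f x"
      using \<open>surj f\<close> by blast
    then show "y \<in> f ` {a..c}"
      using y iff by auto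
  qed
qed

lemma disjoint_supports_commute:
  assumes "inj h" "inj k" and maps: "h ` S \<subseteq> S" "k ` S \<subseteq> S"
    and disjoint: "\<And>y. y \<in> S \<Longrightarrow> k y \<noteq> y \<Longrightarrow> h y = y" and x: "x \<in> S"
  shows "k (h x) = h (k x)"
proof (cases "k x = x")
  case False
  moreover have "k (k x) \<noteq> k x"
    using False \<open>inj k\<close> by (auto dest: injD)
  moreover have "k x \<in> S"
    using maps x by blast
  ultimately show ?thesis
    using disjoint x by simp
next
  case True
  show ?thesis
  proof (cases "h x = x")
    case False
    then have "h (h x) \<noteq> h x"
      using \<open>inj h\<close> by (auto dest: injD)
    moreover have "h x \<in> S"
      using maps x by blast
    ultimately have "k (h x) = h x"
      using disjoint by blast
    then show ?thesis
      using True by simp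
  qed (use True in simp)
qed

lemma comm_fixes_if_disjoint_supports:
  assumes "inj h" "inj k" "h ` S \<subseteq> S" "k ` S \<subseteq> S"
    and "\<And>y. y \<in> S \<Longrightarrow> k y \<noteq> y \<Longrightarrow> h y = y" and "x \<in> S"
  shows "comm h k x = x"
proof -
  have "comm h k x = inv k (inv h (k (h x)))"
    by (simp add: comm_def rmul_def)
  also have "\<dots> = x"
    using disjoint_supports_commute[OF assms] assms(1,2) by simp
  finally show ?thesis .
qed

lemma comm_fixes_if_agree_on_conjugated_support:
  fixes f0 f1 g :: "real \<Rightarrow> real"
  assumes bij: "bij f0" "bij f1" "bij g"
    and maps: "f0 ` S = S" "f1 ` S = S" "g ` S = S"
    and agree: "\<forall>z\<in>supp f1 \<inter> S. f0 (g z) = f1 (g z)"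
    and x: "x \<in> S"
  shows "comm (rmul f0 (inv f1)) (conjg f1 g) x = x"
proof (rule comm_fixes_if_disjoint_supports)
  have inv_maps: "inv f1 ` S = S" "inv g ` S = S"
    using image_inv_f_f[OF bij_is_inj[OF bij(2)], of S] image_inv_f_f[OF bij_is_inj[OF bij(3)], of S]
      maps(2,3) by simp_all
  show "inj (rmul f0 (inv f1))"
    unfolding rmul_def by (rule bij_is_inj[OF bij_comp[OF bij(1) bij_imp_bij_inv[OF bij(2)]]])
  show "inj (conjg f1 g)"
    unfolding conjg_def rmul_def
    by (rule bij_is_inj[OF bij_comp[OF bij_comp[OF bij_imp_bij_inv[OF bij(3)] bij(2)] bij(3)]])
  have "f0 y \<in> S" "f1 y \<in> S" "g y \<in> S" "inv f1 y \<in> S" "inv g y \<in> S" if "y \<in> S" for y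
    using maps inv_maps that by blast+
  then show "rmul f0 (inv f1) ` S \<subseteq> S" "conjg f1 g ` S \<subseteq> S"
    by (auto simp: rmul_def conjg_def)
  show "rmul f0 (inv f1) y = y" if y: "y \<in> S" and moved: "conjg f1 g y \<noteq> y" for y
  proof -
    define z where "z = inv g y"
    have "g z = y"
      using bij(3) by (simp add: z_def bij_is_surj surj_f_inv_f)
    have "z \<in> S"
      using y inv_maps(2) by (auto simp: z_def)
    moreover have "f1 z \<noteq> z"
      using moved \<open>g z = y\<close> by (auto simp: conjg_def rmul_def z_def)
    ultimately have "f0 (g z) = f1 (g z)"
      using agree by (auto simp: supp_def)
    then show ?thesis
      using \<open>g z = y\<close> bij(2) by (simp add: rmul_def bij_is_inj)
  qed
qed (rule x)

lemma least_agreement_point_bound: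
  fixes f g :: "real \<Rightarrow> real"
  assumes cont: "continuous_on {a..c} f" "continuous_on {a..c} g"
    and t: "t \<in> {a..c}" "f t \<noteq> g t"
    and p: "\<exists>p<c. \<forall>x\<in>{p..c}. f x = g x"
    and least: "\<forall>p. p < c \<and> (\<forall>x\<in>{p..c}. f x = g x)
                  \<and> (\<forall>q. q < c \<and> (\<forall>x\<in>{q..c}. f x = g x) \<longrightarrow> p \<le> q) \<longrightarrow> s \<ge> p"
  shows "\<forall>x\<in>{s..c}. f x = g x"
proof -
  define Q where "Q = {q. q < c \<and> (\<forall>x\<in>{q..c}. f x = g x)}"
  define P where "P = Inf Q"
  obtain p0 where p0: "p0 \<in> Q"
    using p by (auto simp: Q_def)
  have above_t: "t < q" if "q \<in> Q" for q
  proof (rule ccontr)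
    assume "\<not> t < q"
    then show False
      using that t by (auto simp: Q_def)
  qed
  then have bdd: "bdd_below Q"
    by (meson bdd_belowI less_imp_le)
  have "P \<le> p0"
    unfolding P_def using p0 bdd by (rule cInf_lower)
  then have "P < c"
    using p0 by (simp add: Q_def)
  have "t \<le> P"
    unfolding P_def using p0 above_t by (intro cInf_greatest) (auto intro: less_imp_le)
  define E where "E = {x \<in> {a..c}. f x - g x = 0}"
  have "{P<..c} \<subseteq> E"
  proof
    fix x assume x: "x \<in> {P<..c}"
    then obtain q where "q \<in> Q" "q < x"
      using cInf_less_iff[of Q x] p0 bdd by (auto simp: P_def)
    then show "x \<in> E"
      using x t \<open>t \<le> P\<close> by (auto simp: Q_def E_def)
  qed
  moreover have "closed E"
    unfolding E_def using cont
    by (intro continuous_closed_preimage_constant continuous_intros) auto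
  ultimately have "{P..c} \<subseteq> E"
    using closure_minimal[of "{P<..c}" E] \<open>P < c\<close> by simp
  then have "P \<in> Q"
    using \<open>P < c\<close> by (auto simp: Q_def E_def)
  moreover have "\<forall>q. q < c \<and> (\<forall>x\<in>{q..c}. f x = g x) \<longrightarrow> P \<le> q"
    unfolding P_def using bdd by (auto simp: Q_def intro: cInf_lower)
  ultimately have "P \<le> s"
    using least unfolding Q_def by blast
  then show ?thesis
    using \<open>P \<in> Q\<close> by (auto simp: Q_def)
qed

lemma ball_Icc_uminus:
  fixes P :: "real \<Rightarrow> bool"
  shows "(\<forall>x\<in>{-v..-u}. P x) \<longleftrightarrow> (\<forall>x\<in>{u..v}. P (- x))"
proof
  assume "\<forall>x\<in>{-v..-u}. P x"
  then show "\<forall>x\<in>{u..v}. P (- x)"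
    by auto
next
  assume *: "\<forall>x\<in>{u..v}. P (- x)"
  show "\<forall>x\<in>{-v..-u}. P x"
  proof
    fix x assume "x \<in> {-v..-u}"
    then show "P x"
      using *[rule_format, of "-x"] by auto
  qed
qed

lemma greatest_agreement_point_bound:
  fixes f g :: "real \<Rightarrow> real"
  assumes cont: "continuous_on {a..c} f" "continuous_on {a..c} g"
    and t: "t \<in> {a..c}" "f t \<noteq> g t"
    and p: "\<exists>\<rho>>a. \<forall>x\<in>{a..\<rho>}. f x = g x"
    and greatest: "\<forall>\<rho>. \<rho> > a \<and> (\<forall>x\<in>{a..\<rho>}. f x = g x)
                  \<and> (\<forall>q. q > a \<and> (\<forall>x\<in>{a..q}. f x = g x) \<longrightarrow> q \<le> \<rho>) \<longrightarrow> s \<le> \<rho>"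
  shows "\<forall>x\<in>{a..s}. f x = g x"
proof -
  let ?f = "\<lambda>x. f (- x)" and ?g = "\<lambda>x. g (- x)"
  have agree_iff: "(\<forall>x\<in>{p..-a}. ?f x = ?g x) \<longleftrightarrow> (\<forall>x\<in>{a..-p}. f x = g x)" for p
    using ball_Icc_uminus[where P="\<lambda>x. f x = g x" and u=p and v="-a"] by auto
  have "(\<lambda>x. - x) ` {-c..-a} \<subseteq> {a..c}"
    by auto
  then have "continuous_on {-c..-a} ?f" "continuous_on {-c..-a} ?g"
    using continuous_on_compose2[OF _ continuous_on_minus[OF continuous_on_id]] cont by blast+
  moreover have "-t \<in> {-c..-a}" "?f (-t) \<noteq> ?g (-t)"
    using t by auto
  moreover have "\<exists>p < -a. \<forall>x\<in>{p..-a}. ?f x = ?g x"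
  proof -
    obtain \<rho> where "\<rho> > a" "\<forall>x\<in>{a..\<rho>}. f x = g x"
      using p by blast
    then show ?thesis
      using agree_iff[of "-\<rho>"] by (intro exI[of _ "-\<rho>"]) auto
  qed
  moreover have "\<forall>p. p < -a \<and> (\<forall>x\<in>{p..-a}. ?f x = ?g x)
      \<and> (\<forall>q. q < -a \<and> (\<forall>x\<in>{q..-a}. ?f x = ?g x) \<longrightarrow> p \<le> q) \<longrightarrow> -s \<ge> p"
  proof (intro allI impI)
    fix p
    assume "p < -a \<and> (\<forall>x\<in>{p..-a}. ?f x = ?g x)
      \<and> (\<forall>q. q < -a \<and> (\<forall>x\<in>{q..-a}. ?f x = ?g x) \<longrightarrow> p \<le> q)"
    then have "-p > a" "\<forall>x\<in>{a..-p}. f x = g x"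
      and least: "\<And>q. q < -a \<Longrightarrow> \<forall>x\<in>{q..-a}. ?f x = ?g x \<Longrightarrow> p \<le> q"
      using agree_iff[of p] by auto
    moreover have "q \<le> -p" if "q > a" "\<forall>x\<in>{a..q}. f x = g x" for q
      using least[of "-q"] agree_iff[of "-q"] that by auto
    ultimately show "-s \<ge> p"
      using greatest by auto
  qed
  ultimately have "\<forall>x\<in>{-s..-a}. ?f x = ?g x"
    by (rule least_agreement_point_bound)
  then show ?thesis
    using agree_iff[of "-s"] by simp
qed

lemma interval_chain_mono:
  fixes b d :: "nat \<Rightarrow> 'a::linorder"
  assumes nonempty: "\<forall>i\<in>{1..n}. b i < d i" and chain: "\<forall>i\<in>{1..<n}. d i \<le> b (Suc i)"
    and "1 \<le> i" "i \<le> j" "j \<le> n"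
  shows "b i \<le> b j \<and> d i \<le> d j"
  using \<open>i \<le> j\<close> \<open>j \<le> n\<close>
proof (induction j rule: dec_induct)
  case base
  then show ?case
    by simp
next
  case (step m)
  then have "b m < d m" "d m \<le> b (Suc m)" "b (Suc m) < d (Suc m)"
    using nonempty chain \<open>1 \<le> i\<close> by auto
  then show ?case
    using step by auto
qed

lemma listed_orbital_bounds:
  assumes list: "{B. orbital f B \<and> B \<subseteq> {a<..<c}} = (\<lambda>i. {b i<..<d i}) ` I" and i: "i \<in> I"
  shows "a \<le> b i" "b i < d i" "d i \<le> c" "f (b i) = b i" "f (d i) = d i"
proof -
  have "orbital f {b i<..<d i}" "{b i<..<d i} \<subseteq> {a<..<c}"
    using list i by blast+
  then have C: "{b i<..<d i} \<in> components (supp f)"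
    by (simp add: orbital_def)
  show "b i < d i" "f (b i) = b i" "f (d i) = d i"
    using interval_component_endpoints[OF C] by (auto simp: supp_def)
  then show "a \<le> b i" "d i \<le> c"
    using \<open>{b i<..<d i} \<subseteq> {a<..<c}\<close> greaterThanLessThan_subseteq_greaterThanLessThan by blast+
qed

lemma supp_point_in_listed_orbital:
  assumes nested: "\<forall>B. orbital f B \<longrightarrow> B \<subseteq> {a<..<c} \<or> B \<inter> {a<..<c} = {}"
    and list: "{B. orbital f B \<and> B \<subseteq> {a<..<c}} = (\<lambda>i. {b i<..<d i}) ` I"
    and z: "z \<in> supp f" "z \<in> {a<..<c}"
  obtains i where "i \<in> I" "z \<in> {b i<..<d i}"
proof -
  let ?B = "connected_component_set (supp f) z"
  have "orbital f ?B" "z \<in> ?B"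
    using z by (auto simp: orbital_def components_iff)
  then have "?B \<subseteq> {a<..<c}"
    using nested z by blast
  then have "?B \<in> (\<lambda>i. {b i<..<d i}) ` I"
    using list \<open>orbital f ?B\<close> by blast
  then show ?thesis
    using \<open>z \<in> ?B\<close> that by blast
qed

lemma listed_orbitals_span_support:
  assumes nested: "\<forall>B. orbital f B \<longrightarrow> B \<subseteq> {a<..<c} \<or> B \<inter> {a<..<c} = {}"
    and list: "{B. orbital f B \<and> B \<subseteq> {a<..<c}} = (\<lambda>i. {b i<..<d i}) ` {1..n}"
    and chain: "\<forall>i\<in>{1..<n}. d i \<le> b (Suc i)"
    and z: "z \<in> supp f" "z \<in> {a<..<c}"
  shows "b 1 < z \<and> z < d n"
proof -
  obtain i where i: "i \<in> {1..n}" "z \<in> {b i<..<d i}"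
    using supp_point_in_listed_orbital[OF nested list z] .
  have "\<forall>i\<in>{1..n}. b i < d i"
    using listed_orbital_bounds[OF list] by blast
  then have "b 1 \<le> b i" "d i \<le> d n"
    using interval_chain_mono[OF _ chain] i(1) by auto
  then show ?thesis
    using i(2) by auto
qed

lemma agreement_at_double_image_right:
  fixes f0 f1 :: "real \<Rightarrow> real"
  assumes mono: "strict_mono f0" and "f0 c = c"
    and cont: "continuous_on {a..c} f0" "continuous_on {a..c} f1"
    and t: "t \<in> {a..c}" "f0 t \<noteq> f1 t"
    and agree: "\<exists>p<c. \<forall>x\<in>{p..c}. f0 x = f1 x"
    and least: "\<forall>p. p < c \<and> (\<forall>x\<in>{p..c}. f0 x = f1 x)
                  \<and> (\<forall>q. q < c \<and> (\<forall>x\<in>{q..c}. f0 x = f1 x) \<longrightarrow> p \<le> q) \<longrightarrow> f0 s \<ge> p"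
    and "s < f0 t" and z: "t < z" "z \<le> c"
  shows "f0 (f0 (f0 z)) = f1 (f0 (f0 z))"
proof -
  have "f0 t < f0 z"
    using z(1) by (simp add: strict_mono_less[OF mono])
  then have "s < f0 z"
    using \<open>s < f0 t\<close> by linarith
  then have "f0 s < f0 (f0 z)"
    by (simp add: strict_mono_less[OF mono])
  have "f0 z \<le> c"
    using strict_mono_less_eq[OF mono, of z c] z(2) \<open>f0 c = c\<close> by simp
  then have "f0 (f0 z) \<le> c"
    using strict_mono_less_eq[OF mono, of "f0 z" c] \<open>f0 c = c\<close> by simp
  then have "f0 (f0 z) \<in> {f0 s..c}"
    using \<open>f0 s < f0 (f0 z)\<close> by simp
  then show ?thesis
    by (rule bspec[OF least_agreement_point_bound[OF cont t agree least]])
qed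

lemma agreement_at_double_image_left:
  fixes f0 f1 :: "real \<Rightarrow> real"
  assumes mono: "strict_mono f0" and "f0 a = a"
    and cont: "continuous_on {a..c} f0" "continuous_on {a..c} f1"
    and t: "t \<in> {a..c}" "f0 t \<noteq> f1 t"
    and agree: "\<exists>\<rho>>a. \<forall>x\<in>{a..\<rho>}. f0 x = f1 x"
    and greatest: "\<forall>\<rho>. \<rho> > a \<and> (\<forall>x\<in>{a..\<rho>}. f0 x = f1 x)
                  \<and> (\<forall>q. q > a \<and> (\<forall>x\<in>{a..q}. f0 x = f1 x) \<longrightarrow> q \<le> \<rho>) \<longrightarrow> f0 s \<le> \<rho>"
    and "f0 t < s" and z: "a \<le> z" "z < t"
  shows "f0 (f0 (f0 z)) = f1 (f0 (f0 z))"
proof -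
  have "f0 z < f0 t"
    using z(2) by (simp add: strict_mono_less[OF mono])
  then have "f0 z < s"
    using \<open>f0 t < s\<close> by linarith
  then have "f0 (f0 z) < f0 s"
    by (simp add: strict_mono_less[OF mono])
  have "a \<le> f0 z"
    using strict_mono_less_eq[OF mono, of a z] z(1) \<open>f0 a = a\<close> by simp
  then have "a \<le> f0 (f0 z)"
    using strict_mono_less_eq[OF mono, of a "f0 z"] \<open>f0 a = a\<close> by simp
  then have "f0 (f0 z) \<in> {a..f0 s}"
    using \<open>f0 (f0 z) < f0 s\<close> by simp
  then show ?thesis
    by (rule bspec[OF greatest_agreement_point_bound[OF cont t agree greatest]])
qed

lemma comm_fixes_orbital_if_agree_on_double_image:
  fixes f0 f1 :: "real \<Rightarrow> real"
  assumes "PL0 f0" "PL0 f1" and orb: "orbital f0 {a<..<c}" and f1_ends: "f1 a = a" "f1 c = c"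
    and agree: "\<And>z. z \<in> supp f1 \<Longrightarrow> z \<in> {a<..<c} \<Longrightarrow> f0 (f0 (f0 z)) = f1 (f0 (f0 z))"
    and x: "x \<in> {a..c}"
  shows "comm (rmul f0 (inv f1)) (conjg f1 (rmul f0 f0)) x = x"
proof -
  note orbital0 = PL0_orbital_interval[OF assms(1) orb]
  have bij: "bij f0" "bij f1"
    using assms(1,2) by (simp_all add: PL0_bij)
  have maps: "f0 ` {a..c} = {a..c}" "f1 ` {a..c} = {a..c}"
    using strict_mono_fixing_endpoints_image_Icc[OF PL0_strict_mono[OF assms(1)] bij_is_surj[OF bij(1)]
        orbital0(2,3)]
      strict_mono_fixing_endpoints_image_Icc[OF PL0_strict_mono[OF assms(2)] bij_is_surj[OF bij(2)] f1_ends]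
    by simp_all
  have maps_sq: "rmul f0 f0 ` {a..c} = {a..c}"
    unfolding rmul_def image_comp[symmetric] using maps(1) by simp
  have bij_sq: "bij (rmul f0 f0)"
    unfolding rmul_def by (rule bij_comp[OF bij(1) bij(1)])
  have "\<forall>z\<in>supp f1 \<inter> {a..c}. f0 (rmul f0 f0 z) = f1 (rmul f0 f0 z)"
  proof
    fix z assume z: "z \<in> supp f1 \<inter> {a..c}"
    then have "z \<noteq> a" "z \<noteq> c"
      using f1_ends by (auto simp: supp_def)
    then have "z \<in> {a<..<c}"
      using z by auto
    then show "f0 (rmul f0 f0 z) = f1 (rmul f0 f0 z)"
      using agree z by (simp add: rmul_def)
  qed
  then show ?thesis
    by (rule comm_fixes_if_agree_on_conjugated_support[OF bij bij_sq maps maps_sq _ x])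
qed

theorem lemma2p7:
  fixes f0 f1 :: "real \<Rightarrow> real" and a c :: real and n :: nat and b d :: "nat \<Rightarrow> real"
  assumes "PL0 f0" and "PL0 f1"
    and orb: "orbital f0 {a<..<c}" and notorb: "\<not> orbital f1 {a<..<c}"
    and nested: "\<forall>B. orbital f1 B \<longrightarrow> B \<subseteq> {a<..<c} \<or> B \<inter> {a<..<c} = {}"
    and n1: "n \<ge> 1"
    and list: "{B. orbital f1 B \<and> B \<subseteq> {a<..<c}} = (\<lambda>i. {b i<..<d i}) ` {1..n}"
    and incr: "\<forall>i\<in>{1..<n}. d i \<le> b (Suc i)"
    and cases:
      "(up_bump f0 {a<..<c} \<and> a < b 1
         \<and> (\<exists>p<c. \<forall>x\<in>{p..c}. f0 x = f1 x)
         \<and> d n = c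
         \<and> (\<forall>p. p < c \<and> (\<forall>x\<in>{p..c}. f0 x = f1 x)
                 \<and> (\<forall>q. q < c \<and> (\<forall>x\<in>{q..c}. f0 x = f1 x) \<longrightarrow> p \<le> q)
               \<longrightarrow> f0 (b n) \<ge> p)
         \<and> f0 (b 1) > b n)
     \<or> (down_bump f0 {a<..<c} \<and> d n < c
         \<and> (\<exists>\<rho>>a. \<forall>x\<in>{a..\<rho>}. f0 x = f1 x)
         \<and> b 1 = a
         \<and> (\<forall>\<rho>. \<rho> > a \<and> (\<forall>x\<in>{a..\<rho>}. f0 x = f1 x)
                 \<and> (\<forall>q. q > a \<and> (\<forall>x\<in>{a..q}. f0 x = f1 x) \<longrightarrow> q \<le> \<rho>)
               \<longrightarrow> f0 (d 1) \<le> \<rho>)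
         \<and> f0 (d n) < d 1)"
  shows "\<forall>x\<in>{a..c}.
           comm (rmul f0 (inv f1)) (conjg f1 (rmul f0 f0)) x = x"
proof -
  note orbital0 = PL0_orbital_interval[OF assms(1) orb]
  have mono: "strict_mono f0"
    using assms(1) by (rule PL0_strict_mono)
  have cont: "continuous_on {a..c} f0" "continuous_on {a..c} f1"
    using assms(1,2) orbital0(4) by (auto simp: PL0_def intro: continuous_on_subset)
  have f1_ends: "f1 a = a" "f1 c = c"
    using nested_orbitals_fix_endpoints[OF cont(2) orbital0(1) nested] by auto
  have ends_listed: "1 \<in> {1..n}" "n \<in> {1..n}"
    using n1 by auto
  note bounds = listed_orbital_bounds[OF list] and span = listed_orbitals_span_support[OF nested list incr]
  have "f0 (f0 (f0 z)) = f1 (f0 (f0 z))" if z: "z \<in> supp f1" "z \<in> {a<..<c}" for z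
    using cases
  proof (elim disjE conjE)
    assume "a < b 1" and p: "\<exists>p<c. \<forall>x\<in>{p..c}. f0 x = f1 x"
      and least: "\<forall>p. p < c \<and> (\<forall>x\<in>{p..c}. f0 x = f1 x)
             \<and> (\<forall>q. q < c \<and> (\<forall>x\<in>{q..c}. f0 x = f1 x) \<longrightarrow> p \<le> q) \<longrightarrow> f0 (b n) \<ge> p"
      and lt: "b n < f0 (b 1)"
    have "b 1 \<in> {a<..<c}"
      using \<open>a < b 1\<close> bounds[OF ends_listed(1)] by auto
    then have t: "b 1 \<in> {a..c}" "f0 (b 1) \<noteq> f1 (b 1)"
      using orbital0(5) bounds(4)[OF ends_listed(1)] by auto
    show ?thesis
      using span[OF z] z
      by (intro agreement_at_double_image_right[OF mono orbital0(3) cont t p least lt]) auto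
  next
    assume "b 1 = a" "d n < c" and p: "\<exists>\<rho>>a. \<forall>x\<in>{a..\<rho>}. f0 x = f1 x"
      and greatest: "\<forall>\<rho>. \<rho> > a \<and> (\<forall>x\<in>{a..\<rho>}. f0 x = f1 x)
             \<and> (\<forall>q. q > a \<and> (\<forall>x\<in>{a..q}. f0 x = f1 x) \<longrightarrow> q \<le> \<rho>) \<longrightarrow> f0 (d 1) \<le> \<rho>"
      and lt: "f0 (d n) < d 1"
    have "d n \<in> {a<..<c}"
      using \<open>b 1 = a\<close> \<open>d n < c\<close> bounds[OF ends_listed(2)] by auto
    then have t: "d n \<in> {a..c}" "f0 (d n) \<noteq> f1 (d n)"
      using orbital0(5) bounds(5)[OF ends_listed(2)] by auto
    show ?thesis
      using span[OF z] z
      by (intro agreement_at_double_image_left[OF mono orbital0(2) cont t p greatest lt]) auto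
  qed
  then show ?thesis
    using comm_fixes_orbital_if_agree_on_double_image[OF assms(1,2) orb f1_ends] by blast
qed

end
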